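(* Let $0\le c\le a\le 1/2$ and consider the following eight points of $\mathbb{R}^2$: $q_U=(a,3-c)$, $q_D=(a,-1-c)$, $q_{UL}=(-1+c,2+a)$, $q_L=(-1-a,c)$, $q_{LD}=(-1-c,-a)$, $q_{UR}=(2-c,3-a)$, $q_R=(3-a,c)$, $q_{RD}=(2+c,-1+a)$, and let $W$ be the set of these points. Then the segment $[q_U,q_D]$ is a Delaunay edge of $W$, i.e., there exists a circle passing through $q_U$ and $q_D$ such that every other point of $W$ lies outside or on this circle. *)

theory Defs
  imports "HOL-Analysis.Analysis"
begin

definition qU :: "real \<Rightarrow> real \<Rightarrow> real \<times> real" where "qU a c = (a, 3 - c)"
definition qD :: "real \<Rightarrow> real \<Rightarrow> real \<times> real" where "qD a c = (a, -1 - c)"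
definition qUL :: "real \<Rightarrow> real \<Rightarrow> real \<times> real" where "qUL a c = (-1 + c, 2 + a)"
definition qL :: "real \<Rightarrow> real \<Rightarrow> real \<times> real" where "qL a c = (-1 - a, c)"
definition qLD :: "real \<Rightarrow> real \<Rightarrow> real \<times> real" where "qLD a c = (-1 - c, -a)"
definition qUR :: "real \<Rightarrow> real \<Rightarrow> real \<times> real" where "qUR a c = (2 - c, 3 - a)"
definition qR :: "real \<Rightarrow> real \<Rightarrow> real \<times> real" where "qR a c = (3 - a, c)"
definition qRD :: "real \<Rightarrow> real \<Rightarrow> real \<times> real" where "qRD a c = (2 + c, -1 + a)"

definition W :: "real \<Rightarrow> real \<Rightarrow> (real \<times> real) set" where
  "W a c = {qU a c, qD a c, qUL a c, qL a c, qLD a c, qUR a c, qR a c, qRD a c}"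

definition delaunay_edge :: "(real \<times> real) set \<Rightarrow> real \<times> real \<Rightarrow> real \<times> real \<Rightarrow> bool" where
  "delaunay_edge S p q \<longleftrightarrow>
     (\<exists>z r. dist z p = r \<and> dist z q = r \<and> (\<forall>w\<in>S. dist z w \<ge> r))"

end

theory Submission
  imports Defs
begin

text \<open>Take the circle centred at z = (1 - a, 1 - c). Writing g = parabola, the squared
  distances from z are 5 - 4 g a for q_U and q_D, 5 - 4 g c for q_L and q_R, 5 - 2 g (a + c)
  for q_UL and q_RD, and 5 - 2 g (a - c) for q_LD and q_UR. Since g is increasing on [0, 1/2],
  nonnegative on [0, 1] and subadditive on nonnegative arguments, g c, g (a + c) / 2 and
  g (a - c) / 2 are all at most g a, so q_U and q_D are the points of W nearest to z.\<close>

definition parabola :: "real \<Rightarrow> real" where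
  "parabola x = x * (1 - x)"

lemma parabola_nonneg: "0 \<le> x \<Longrightarrow> x \<le> 1 \<Longrightarrow> 0 \<le> parabola x"
  by (simp add: parabola_def)

lemma parabola_mono:
  assumes "x \<le> y" and "x + y \<le> 1"
  shows "parabola x \<le> parabola y"
proof -
  have "parabola y - parabola x = (y - x) * (1 - x - y)"
    by (simp add: parabola_def algebra_simps)
  moreover have "0 \<le> (y - x) * (1 - x - y)"
    using assms by simp
  ultimately show ?thesis by simp
qed

lemma parabola_add_le:
  assumes "0 \<le> x * y"
  shows "parabola (x + y) \<le> parabola x + parabola y"
proof -
  have "parabola (x + y) = parabola x + parabola y - 2 * (x * y)"
    by (simp add: parabola_def algebra_simps)
  then show ?thesis
    using assms by linarith
qed

lemma delaunay_edgeI: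
  assumes "dist z p = dist z q" and "\<And>w. w \<in> S \<Longrightarrow> dist z p \<le> dist z w"
  shows "delaunay_edge S p q"
  unfolding delaunay_edge_def using assms by (intro exI[of _ z] exI[of _ "dist z p"]) auto

lemma dist_Pair_Pair_real:
  "dist (x1, y1) (x2, y2) = sqrt ((x1 - x2)\<^sup>2 + (y1 - y2)\<^sup>2)" for x1 y1 x2 y2 :: real
  by (simp add: dist_Pair_Pair dist_real_def)

lemma dist_from_centre:
  fixes a c :: real
  shows "dist (1 - a, 1 - c) (qU a c) = sqrt (5 - 4 * parabola a)"
    and "dist (1 - a, 1 - c) (qD a c) = sqrt (5 - 4 * parabola a)"
    and "dist (1 - a, 1 - c) (qL a c) = sqrt (5 - 4 * parabola c)"
    and "dist (1 - a, 1 - c) (qR a c) = sqrt (5 - 4 * parabola c)"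
    and "dist (1 - a, 1 - c) (qUL a c) = sqrt (5 - 2 * parabola (a + c))"
    and "dist (1 - a, 1 - c) (qRD a c) = sqrt (5 - 2 * parabola (a + c))"
    and "dist (1 - a, 1 - c) (qLD a c) = sqrt (5 - 2 * parabola (a - c))"
    and "dist (1 - a, 1 - c) (qUR a c) = sqrt (5 - 2 * parabola (a - c))"
  by (simp_all add: dist_Pair_Pair_real qU_def qD_def qL_def qR_def qUL_def qRD_def qLD_def qUR_def
      parabola_def power2_eq_square algebra_simps)

theorem mainTheorem7:
  fixes a c :: real
  assumes "0 \<le> c" and "c \<le> a" and "a \<le> 1/2"
  shows "delaunay_edge (W a c) (qU a c) (qD a c)"
proof (rule delaunay_edgeI[where z = "(1 - a, 1 - c)"])
  have "parabola c \<le> parabola a"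
    using assms by (intro parabola_mono) auto
  moreover have "parabola (a + c) \<le> 2 * parabola a"
    using parabola_add_le[of a c] \<open>parabola c \<le> parabola a\<close> assms by simp
  moreover have "parabola (a - c) \<le> 2 * parabola a"
    using parabola_mono[of "a - c" a] parabola_nonneg[of a] assms by simp
  ultimately have bounds: "sqrt (5 - 4 * parabola a) \<le> sqrt (5 - 4 * parabola c)"
    "sqrt (5 - 4 * parabola a) \<le> sqrt (5 - 2 * parabola (a + c))"
    "sqrt (5 - 4 * parabola a) \<le> sqrt (5 - 2 * parabola (a - c))"
    by simp_all
  show "dist (1 - a, 1 - c) (qU a c) \<le> dist (1 - a, 1 - c) w" if "w \<in> W a c" for w
    using that bounds unfolding W_def
    by (auto simp only: dist_from_centre insert_iff empty_iff order_refl)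
next
  show "dist (1 - a, 1 - c) (qU a c) = dist (1 - a, 1 - c) (qD a c)"
    by (simp only: dist_from_centre)
qed

end
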